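(* Assume $\lambda_1,\lambda_2>0$. If $\lambda_1\lambda_2<1$, then the map $(\theta_1,\theta_2)\mapsto(\varphi_1(\theta_2),\varphi_2(\theta_1))$ admits a unique fixed point $(\theta_1^*,\theta_2^* )$ in $(0,\infty)\times(0,\infty)$, and the two-layer game has a unique equilibrium, consisting of: Reinsurer $i$'s equilibrium premium strategy equal to the constant $\theta_i^*$ on $[0,T]$ ($i=1,2$), and the insurer's equilibrium reinsurance strategy $p^*=(p_1^*,p_2^* )$ equal to the constant \[ p_1^*=\frac{\delta_0\theta_2^*}{\delta_0\theta_1^*+\delta_0\theta_2^*+2\theta_1^*\theta_2^*},\qquad p_2^*=\frac{\delta_0\theta_1^*}{\delta_0\theta_1^*+\delta_0\theta_2^*+2\theta_1^*\theta_2^*}. \] If $\lambda_1\lambda_2\ge1$, there is no equilibrium.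
   Context: Setting: over $[0,T]$, an insurer with loss $dL=\mu dt+\sigma dW$ ($\mu,\sigma>0$, $W$ a standard Brownian motion with augmented natural filtration) and income rate $c>0$ cedes proportions $p_1,p_2$ (deterministic, $p_i\in[0,1]$, $p_1+p_2\in[0,1]$) to Reinsurers 1, 2, who charge variance premiums at rate $\mu p_k+\theta_k\sigma^2p_k^2$ with loadings $\theta_k$ (admissible: deterministic, positive, uniformly bounded). All agents have exponential utility $U_k(x)=-\frac1{\delta_k}e^{-\delta_kx}$, $\delta_k>0$ ($k=0$ insurer, $k=1,2$ reinsurers). Insurer's surplus: $dX_0=(c-\mu-\theta_1\sigma^2p_1^2-\theta_2\sigma^2p_2^2)dt-\sigma(1-p_1-p_2)dW$; given $\theta=(\theta_1,\theta_2)$, the insurer chooses $\bar p^\theta$ maximizing $\mathbb E[U_0(X_0(T))\mid X_0(t)=x]$. Reinsurer surplus under the insurer's response: $dX_k=\theta_k\sigma^2(\bar p_k^\theta)^2dt-\sigma\bar p_k^\theta dW$. With competition parameters $\lambda_1,\lambda_2$, Reinsurer $i$'s relative performance is $Y_i=X_i-\lambda_jX_j$ ($j\ne i$), and, for fixed $\theta_j$, Reinsurer $i$ chooses $\bar\theta_i^{\theta_j}$ maximizing $\mathbb E[U_i(Y_i(T))\mid Y_i(t)=y]$ (Stackelberg leader anticipating $\bar p^\theta$). An equilibrium is an admissible fixed point $\theta^*=(\theta_1^*,\theta_2^* )$ of $(\theta_1,\theta_2)\mapsto(\bar\theta_1^{\theta_2},\bar\theta_2^{\theta_1})$ (Nash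 equilibrium between reinsurers) together with the insurer's strategy $p^*=\bar p^{\theta^*}$. Define, for $i\ne j$, \[ \varphi_i(x)=\frac{(\delta_0+2\delta_i)x^2+(1+\lambda_j)\delta_0\delta_i\,x}{2x^2+\big((1+2\lambda_j)\delta_0+2\lambda_j\delta_i\big)x+\lambda_j(1+\lambda_j)\delta_0\delta_i}. \] *)

theory Defs
  imports "HOL-Probability.Probability"
begin

definition U_exp :: "real \<Rightarrow> real \<Rightarrow> real" where
  "U_exp d x = -(1 / d) * exp (- d * x)"

text \<open>Under deterministic strategies the terminal
  surplus X(T), conditionally on X(t) = x, is x + int_t^T a ds - int_t^T b dW, a
  Gaussian with mean x + int_t^T a and variance int_t^T b^2 (Wiener integral).\<close>
definition gauss_EU :: "(real \<Rightarrow> real) \<Rightarrow> real \<Rightarrow> real \<Rightarrow> real" where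
  "gauss_EU U m v = (if v = 0 then U m
     else (LINT y|lborel. U y * normal_density m (sqrt v) y))"

definition adm_reins :: "real \<Rightarrow> (real \<Rightarrow> real) \<Rightarrow> (real \<Rightarrow> real) \<Rightarrow> bool" where
  "adm_reins T p1 p2 \<longleftrightarrow>
     set_borel_measurable lborel {0..T} p1 \<and> set_borel_measurable lborel {0..T} p2 \<and>
     (\<forall>s\<in>{0..T}. 0 \<le> p1 s \<and> 0 \<le> p2 s \<and> p1 s + p2 s \<le> 1)"

definition adm_premium :: "real \<Rightarrow> (real \<Rightarrow> real) \<Rightarrow> bool" where
  "adm_premium T th \<longleftrightarrow>
     set_borel_measurable lborel {0..T} th \<and> (\<exists>B. \<forall>s\<in>{0..T}. 0 < th s \<and> th s \<le> B)"

definition J_ins :: "real \<Rightarrow> real \<Rightarrow> real \<Rightarrow> real \<Rightarrow> real \<Rightarrow> (real \<Rightarrow> real) \<Rightarrow> (real \<Rightarrow> real)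
    \<Rightarrow> (real \<Rightarrow> real) \<Rightarrow> (real \<Rightarrow> real) \<Rightarrow> real \<Rightarrow> real \<Rightarrow> real" where
  "J_ins T \<mu> \<sigma> c d0 th1 th2 p1 p2 t x =
     gauss_EU (U_exp d0)
       (x + (LINT s:{t..T}|lborel. c - \<mu> - th1 s * \<sigma>\<^sup>2 * (p1 s)\<^sup>2 - th2 s * \<sigma>\<^sup>2 * (p2 s)\<^sup>2))
       (\<sigma>\<^sup>2 * (LINT s:{t..T}|lborel. (1 - p1 s - p2 s)\<^sup>2))"

definition ins_opt :: "real \<Rightarrow> real \<Rightarrow> real \<Rightarrow> real \<Rightarrow> real \<Rightarrow> (real \<Rightarrow> real) \<Rightarrow> (real \<Rightarrow> real)
    \<Rightarrow> (real \<Rightarrow> real) \<Rightarrow> (real \<Rightarrow> real) \<Rightarrow> bool" where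
  "ins_opt T \<mu> \<sigma> c d0 th1 th2 p1 p2 \<longleftrightarrow>
     adm_reins T p1 p2 \<and>
     (\<forall>t\<in>{0..T}. \<forall>x q1 q2. adm_reins T q1 q2 \<longrightarrow>
        J_ins T \<mu> \<sigma> c d0 th1 th2 q1 q2 t x \<le> J_ins T \<mu> \<sigma> c d0 th1 th2 p1 p2 t x)"

text \<open>Reinsurer i's objective E[U_i(Y_i(T)) | Y_i(t) = y], Y_i = X_i - lam_j X_j,
  with dX_k = th_k sigma^2 p_k^2 dt - sigma p_k dW.\<close>
definition J_re :: "real \<Rightarrow> real \<Rightarrow> real \<Rightarrow> real \<Rightarrow> (real \<Rightarrow> real) \<Rightarrow> (real \<Rightarrow> real)
    \<Rightarrow> (real \<Rightarrow> real) \<Rightarrow> (real \<Rightarrow> real) \<Rightarrow> real \<Rightarrow> real \<Rightarrow> real" where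
  "J_re T \<sigma> di lj thi thj pp pq t y =
     gauss_EU (U_exp di)
       (y + (LINT s:{t..T}|lborel. thi s * \<sigma>\<^sup>2 * (pp s)\<^sup>2 - lj * (thj s * \<sigma>\<^sup>2 * (pq s)\<^sup>2)))
       (\<sigma>\<^sup>2 * (LINT s:{t..T}|lborel. (pp s - lj * pq s)\<^sup>2))"

definition is_equilibrium :: "real \<Rightarrow> real \<Rightarrow> real \<Rightarrow> real \<Rightarrow> real \<Rightarrow> real \<Rightarrow> real \<Rightarrow> real \<Rightarrow> real
    \<Rightarrow> (real \<Rightarrow> real) \<Rightarrow> (real \<Rightarrow> real) \<Rightarrow> (real \<Rightarrow> real) \<Rightarrow> (real \<Rightarrow> real) \<Rightarrow> bool" where
  "is_equilibrium T \<mu> \<sigma> c d0 d1 d2 l1 l2 th1 th2 p1 p2 \<longleftrightarrow>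
     adm_premium T th1 \<and> adm_premium T th2 \<and>
     ins_opt T \<mu> \<sigma> c d0 th1 th2 p1 p2 \<and>
     (\<forall>th1' q1 q2. adm_premium T th1' \<and> ins_opt T \<mu> \<sigma> c d0 th1' th2 q1 q2 \<longrightarrow>
        (\<forall>t\<in>{0..T}. \<forall>y. J_re T \<sigma> d1 l2 th1' th2 q1 q2 t y \<le> J_re T \<sigma> d1 l2 th1 th2 p1 p2 t y)) \<and>
     (\<forall>th2' q1 q2. adm_premium T th2' \<and> ins_opt T \<mu> \<sigma> c d0 th1 th2' q1 q2 \<longrightarrow>
        (\<forall>t\<in>{0..T}. \<forall>y. J_re T \<sigma> d2 l1 th2' th1 q2 q1 t y \<le> J_re T \<sigma> d2 l1 th2 th1 p2 p1 t y))"

text \<open>phi_i with di = delta_i, lj = lambda_j.\<close>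
definition phi :: "real \<Rightarrow> real \<Rightarrow> real \<Rightarrow> real \<Rightarrow> real" where
  "phi d0 di lj x =
     ((d0 + 2 * di) * x\<^sup>2 + (1 + lj) * d0 * di * x) /
     (2 * x\<^sup>2 + ((1 + 2 * lj) * d0 + 2 * lj * di) * x + lj * (1 + lj) * d0 * di)"

end

theory Submission
  imports Defs
begin

(* Deterministic strategies make terminal wealth Gaussian, so with exponential utility every
   objective equals U(x + integral of a rate), where the rate at time s only depends on the
   loadings and cessions at s; optimality is therefore decided pointwise, almost everywhere.
   The insurer's rate is a positive definite quadratic in (p1, p2), minimised by the stated
   proportions.  Substituting this response, reinsurer i's rate as a function of its own loading
   is maximised exactly at phi_i of the rival's loading, so equilibria are (a.e.) the fixed points
   of (theta1, theta2) -> (phi_1 theta2, phi_2 theta1).  Writing phi(x) = x r(x) with r strictly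
   decreasing, r(0) = 1/lambda and phi bounded, the intermediate value theorem yields a fixed
   point when lambda1 lambda2 < 1; it is unique because r_1 r_2 = 1 at every fixed point; and
   phi(x) < x/lambda rules out fixed points when lambda1 lambda2 >= 1. *)

section \<open>The reaction function phi\<close>

definition phi_den :: "real \<Rightarrow> real \<Rightarrow> real \<Rightarrow> real \<Rightarrow> real" where
  "phi_den d0 d l x = 2 * x\<^sup>2 + ((1 + 2 * l) * d0 + 2 * l * d) * x + l * (1 + l) * d0 * d"

definition phi_ratio :: "real \<Rightarrow> real \<Rightarrow> real \<Rightarrow> real \<Rightarrow> real" where
  "phi_ratio d0 d l x = ((d0 + 2 * d) * x + (1 + l) * d0 * d) / phi_den d0 d l x"

lemma phi_eq_mult_ratio: "phi d0 d l x = x * phi_ratio d0 d l x"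
  unfolding phi_def phi_ratio_def phi_den_def by (simp add: power2_eq_square algebra_simps)

lemma phi_eq_div_den: "phi d0 d l x = ((d0 + 2 * d) * x\<^sup>2 + (1 + l) * d0 * d * x) / phi_den d0 d l x"
  unfolding phi_def phi_den_def ..

context
  fixes d0 d l :: real
  assumes d0: "d0 > 0" and d: "d > 0" and l: "l > 0"
begin

lemma phi_den_pos: "x \<ge> 0 \<Longrightarrow> phi_den d0 d l x > 0"
  unfolding phi_den_def using d0 d l by (intro add_nonneg_pos) auto

lemma phi_ratio_pos: "x \<ge> 0 \<Longrightarrow> phi_ratio d0 d l x > 0"
  unfolding phi_ratio_def using phi_den_pos[of x] d0 d l by (intro divide_pos_pos add_nonneg_pos) auto

lemma phi_nonneg: "x \<ge> 0 \<Longrightarrow> phi d0 d l x \<ge> 0"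
  using phi_ratio_pos[of x] by (simp add: phi_eq_mult_ratio)

lemma phi_pos: "x > 0 \<Longrightarrow> phi d0 d l x > 0"
  using phi_ratio_pos[of x] by (simp add: phi_eq_mult_ratio)

lemma phi_ratio_0: "phi_ratio d0 d l 0 = 1 / l"
proof -
  have "l * (1 + l) * d0 * d > 0" using d0 d l by simp
  then show ?thesis unfolding phi_ratio_def phi_den_def using l by (simp add: field_simps)
qed

lemma phi_ratio_strict_antimono:
  assumes "0 \<le> x" "x < y"
  shows "phi_ratio d0 d l y < phi_ratio d0 d l x"
proof -
  have "((d0 + 2 * d) * x + (1 + l) * d0 * d) * phi_den d0 d l y
          - ((d0 + 2 * d) * y + (1 + l) * d0 * d) * phi_den d0 d l x
      = (y - x) * (2 * (d0 + 2 * d) * x * y + 2 * (1 + l) * d0 * d * (x + y) + (1 + l)\<^sup>2 * d0\<^sup>2 * d)"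
    unfolding phi_den_def by (simp add: power2_eq_square algebra_simps)
  also have "\<dots> > 0"
    using assms d0 d l by (intro mult_pos_pos add_nonneg_pos) auto
  finally show ?thesis
    unfolding phi_ratio_def using phi_den_pos assms by (simp add: field_simps)
qed

lemma phi_strict_mono:
  assumes "0 \<le> x" "x < y"
  shows "phi d0 d l x < phi d0 d l y"
proof -
  have "((d0 + 2 * d) * y\<^sup>2 + (1 + l) * d0 * d * y) * phi_den d0 d l x
          - ((d0 + 2 * d) * x\<^sup>2 + (1 + l) * d0 * d * x) * phi_den d0 d l y
      = (y - x) * (((1 + 2 * l) * d0\<^sup>2 + 4 * l * d0 * d + 4 * l * d\<^sup>2) * x * y
          + (d0 + 2 * d) * l * (1 + l) * d0 * d * (x + y) + l * ((1 + l) * d0 * d)\<^sup>2)"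
    unfolding phi_den_def by (simp add: power2_eq_square algebra_simps)
  also have "\<dots> > 0"
    using assms d0 d l by (intro mult_pos_pos add_nonneg_pos) auto
  finally show ?thesis
    unfolding phi_eq_div_den using phi_den_pos assms by (simp add: field_simps)
qed

lemma phi_less_div: "x > 0 \<Longrightarrow> phi d0 d l x < x / l"
proof -
  assume x: "x > 0"
  have "l * ((d0 + 2 * d) * x + (1 + l) * d0 * d) < phi_den d0 d l x"
    unfolding phi_den_def using x d0 l
    by (simp add: power2_eq_square algebra_simps add_pos_pos)
  then have "phi_ratio d0 d l x < 1 / l"
    unfolding phi_ratio_def using phi_den_pos[of x] x l by (simp add: field_simps)
  then show ?thesis
    unfolding phi_eq_mult_ratio using x l by (simp add: field_simps)
qed

lemma phi_less_limit: "x \<ge> 0 \<Longrightarrow> phi d0 d l x < (d0 + 2 * d) / 2"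
proof -
  assume x: "x \<ge> 0"
  have "(d0 + 2 * d) * phi_den d0 d l x - 2 * ((d0 + 2 * d) * x\<^sup>2 + (1 + l) * d0 * d * x)
      = ((1 + 2 * l) * d0\<^sup>2 + 4 * l * d0 * d + 4 * l * d\<^sup>2) * x + (d0 + 2 * d) * l * (1 + l) * d0 * d"
    unfolding phi_den_def by (simp add: power2_eq_square algebra_simps)
  also have "\<dots> > 0"
    using x d0 d l by (intro add_nonneg_pos mult_nonneg_nonneg) auto
  finally show ?thesis
    unfolding phi_eq_div_den using phi_den_pos x by (simp add: field_simps)
qed

lemma continuous_on_phi_ratio: "continuous_on {0..} (phi_ratio d0 d l)"
proof -
  have den: "continuous_on {0..} (phi_den d0 d l)"
    unfolding phi_den_def by (intro continuous_intros)
  show ?thesis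
    unfolding phi_ratio_def by (intro continuous_on_divide continuous_intros den) (auto dest: phi_den_pos)
qed

lemma continuous_on_phi: "continuous_on {0..} (phi d0 d l)"
proof -
  have "phi d0 d l = (\<lambda>x. x * phi_ratio d0 d l x)"
    by (rule ext) (rule phi_eq_mult_ratio)
  then show ?thesis
    by (simp only:) (intro continuous_intros continuous_on_phi_ratio)
qed

end

definition phi_fixpoint :: "real \<Rightarrow> real \<Rightarrow> real \<Rightarrow> real \<Rightarrow> real \<Rightarrow> real \<Rightarrow> real \<Rightarrow> bool" where
  "phi_fixpoint d0 d1 d2 l1 l2 a b \<longleftrightarrow>
     a > 0 \<and> b > 0 \<and> phi d0 d1 l2 b = a \<and> phi d0 d2 l1 a = b"

context
  fixes d0 d1 d2 l1 l2 :: real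
  assumes pos: "d0 > 0" "d1 > 0" "d2 > 0" "l1 > 0" "l2 > 0"
begin

lemma phi_fixpoint_imp_lambda_less:
  assumes "phi_fixpoint d0 d1 d2 l1 l2 a b"
  shows "l1 * l2 < 1"
proof -
  have less: "a * l2 < b" "b * l1 < a"
    using assms phi_less_div[of d0 d1 l2 b] phi_less_div[of d0 d2 l1 a] pos
    by (auto simp: phi_fixpoint_def field_simps)
  have "a * l2 * l1 < a"
    using mult_strict_right_mono[OF less(1) pos(4)] less(2) by linarith
  then have "a * (l1 * l2) < a * 1"
    by (simp add: ac_simps)
  then show ?thesis
    using assms by (simp add: phi_fixpoint_def)
qed

lemma phi_fixpoint_ratio_product:
  assumes "phi_fixpoint d0 d1 d2 l1 l2 a b"
  shows "phi_ratio d0 d1 l2 b * phi_ratio d0 d2 l1 a = 1"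
proof -
  have a: "a = b * phi_ratio d0 d1 l2 b" and b: "b = a * phi_ratio d0 d2 l1 a"
    using assms phi_eq_mult_ratio by (auto simp: phi_fixpoint_def)
  have "b * (phi_ratio d0 d1 l2 b * phi_ratio d0 d2 l1 a) = b"
    unfolding mult.assoc[symmetric] a[symmetric] using b by simp
  then show ?thesis
    using assms by (simp add: phi_fixpoint_def)
qed

lemma phi_fixpoint_unique:
  assumes "phi_fixpoint d0 d1 d2 l1 l2 a b" "phi_fixpoint d0 d1 d2 l1 l2 a' b'"
  shows "a = a' \<and> b = b'"
proof -
  have "\<not> b < b'" if fp: "phi_fixpoint d0 d1 d2 l1 l2 a b" "phi_fixpoint d0 d1 d2 l1 l2 a' b'"
    for a b a' b'
  proof
    assume "b < b'"
    moreover from this have "a < a'"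
      using fp phi_strict_mono[OF pos(1,2,5), of b b'] by (auto simp: phi_fixpoint_def)
    ultimately have "phi_ratio d0 d1 l2 b' < phi_ratio d0 d1 l2 b"
        "phi_ratio d0 d2 l1 a' < phi_ratio d0 d2 l1 a"
      using fp phi_ratio_strict_antimono[OF pos(1,2,5), of b b']
        phi_ratio_strict_antimono[OF pos(1,3,4), of a a']
      by (simp_all add: phi_fixpoint_def)
    then have "phi_ratio d0 d1 l2 b' * phi_ratio d0 d2 l1 a' < phi_ratio d0 d1 l2 b * phi_ratio d0 d2 l1 a"
      using fp phi_ratio_pos[OF pos(1,2,5), of b'] phi_ratio_pos[OF pos(1,3,4), of a']
      by (intro mult_strict_mono) (auto simp: phi_fixpoint_def)
    then show False
      using phi_fixpoint_ratio_product fp by simp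
  qed
  then have "b = b'"
    using assms by (meson linorder_neq_iff)
  then show ?thesis
    using assms by (simp add: phi_fixpoint_def)
qed

lemma phi_fixpoint_exists:
  assumes "l1 * l2 < 1"
  shows "\<exists>a b. phi_fixpoint d0 d1 d2 l1 l2 a b"
proof -
  \<comment> \<open>F b = phi2 (phi1 b) / b, extended continuously to b = 0\<close>
  define F where "F x = phi_ratio d0 d1 l2 x * phi_ratio d0 d2 l1 (phi d0 d1 l2 x)" for x
  have F_mult: "phi d0 d2 l1 (phi d0 d1 l2 x) = x * F x" for x
    by (simp add: F_def phi_eq_mult_ratio)
  have "F 0 = 1 / (l1 * l2)"
    using pos by (simp add: F_def phi_ratio_0 phi_eq_mult_ratio)
  moreover have "1 < 1 / (l1 * l2)"
    using assms pos by (simp add: field_simps)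
  ultimately have F0: "1 < F 0"
    by simp
  define M where "M = (d0 + 2 * d2) / 2"
  have M: "M > 0"
    using pos by (simp add: M_def)
  have "phi d0 d1 l2 M \<ge> 0"
    using M phi_nonneg[OF pos(1,2,5)] by simp
  from phi_less_limit[OF pos(1,3,4) this]
  have "M * F M < M * 1"
    by (simp add: M_def F_mult)
  with M have FM: "F M < 1"
    by (simp only: mult_less_cancel_left_pos)
  have "continuous_on {0..} (\<lambda>x. phi_ratio d0 d2 l1 (phi d0 d1 l2 x))"
    using phi_nonneg[OF pos(1,2,5)]
    by (intro continuous_on_compose2[OF continuous_on_phi_ratio[OF pos(1,3,4)] continuous_on_phi[OF pos(1,2,5)]])
      (auto simp: image_subset_iff)
  then have "continuous_on {0..M} F"
    unfolding F_def
    by (intro continuous_intros continuous_on_subset[OF continuous_on_phi_ratio[OF pos(1,2,5)]]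
        continuous_on_subset[OF \<open>continuous_on {0..} _\<close>]) auto
  then obtain b where b: "0 \<le> b" "F b = 1"
    using IVT2'[of F M 1 0] F0 FM M by auto
  with F0 have "b > 0"
    by (cases "b = 0") auto
  then have "phi_fixpoint d0 d1 d2 l1 l2 (phi d0 d1 l2 b) b"
    unfolding phi_fixpoint_def using F_mult[of b] b phi_pos[OF pos(1,2,5)] by simp
  then show ?thesis
    by blast
qed

lemma phi_fixpoint_ex1:
  assumes "l1 * l2 < 1"
  shows "\<exists>!ab. phi_fixpoint d0 d1 d2 l1 l2 (fst ab) (snd ab)"
proof -
  obtain a b where fp: "phi_fixpoint d0 d1 d2 l1 l2 a b"
    using phi_fixpoint_exists[OF assms] by blast
  show ?thesis
  proof (rule ex1I[of _ "(a, b)"])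
    fix ab :: "real \<times> real"
    assume "phi_fixpoint d0 d1 d2 l1 l2 (fst ab) (snd ab)"
    then show "ab = (a, b)"
      using phi_fixpoint_unique[OF fp] by (simp add: prod_eq_iff)
  qed (use fp in simp)
qed

end

section \<open>Pointwise optimal responses\<close>

definition best_p1 :: "real \<Rightarrow> real \<Rightarrow> real \<Rightarrow> real" where
  "best_p1 d0 a b = d0 * b / (d0 * a + d0 * b + 2 * a * b)"

definition best_p2 :: "real \<Rightarrow> real \<Rightarrow> real \<Rightarrow> real" where
  "best_p2 d0 a b = d0 * a / (d0 * a + d0 * b + 2 * a * b)"

definition ins_cost :: "real \<Rightarrow> real \<Rightarrow> real \<Rightarrow> real \<Rightarrow> real \<Rightarrow> real" where
  "ins_cost d0 a b p q = a * p\<^sup>2 + b * q\<^sup>2 + d0 / 2 * (1 - p - q)\<^sup>2"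

definition reins_gain :: "real \<Rightarrow> real \<Rightarrow> real \<Rightarrow> real \<Rightarrow> real \<Rightarrow> real \<Rightarrow> real" where
  "reins_gain d l a b p q = a * p\<^sup>2 - l * (b * q\<^sup>2) - d / 2 * (p - l * q)\<^sup>2"

definition leader_gain :: "real \<Rightarrow> real \<Rightarrow> real \<Rightarrow> real \<Rightarrow> real \<Rightarrow> real" where
  "leader_gain d0 d l a b = reins_gain d l a b (best_p1 d0 a b) (best_p2 d0 a b)"

lemma best_p2_swap: "best_p2 d0 a b = best_p1 d0 b a"
  unfolding best_p1_def best_p2_def by (simp add: algebra_simps)

context
  fixes d0 a b :: real
  assumes d0: "d0 > 0" and a: "a > 0" and b: "b > 0"
begin

lemma one_minus_best_p: "1 - best_p1 d0 a b - best_p2 d0 a b = 2 * a * b / (d0 * a + d0 * b + 2 * a * b)"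
proof -
  define D where "D = d0 * a + d0 * b + 2 * a * b"
  have "D > 0"
    unfolding D_def using d0 a b by (intro add_pos_pos) auto
  then have "1 - d0 * b / D - d0 * a / D = (D - d0 * b - d0 * a) / D"
    by (simp add: field_simps)
  also have "D - d0 * b - d0 * a = 2 * a * b"
    by (simp add: D_def)
  finally show ?thesis
    unfolding best_p1_def best_p2_def D_def[symmetric] .
qed

lemma best_p_bounds: "0 \<le> best_p1 d0 a b" "0 \<le> best_p2 d0 a b" "best_p1 d0 a b + best_p2 d0 a b \<le> 1"
proof -
  have "0 < d0 * a + d0 * b + 2 * a * b"
    using d0 a b by (intro add_pos_pos) auto
  then show "0 \<le> best_p1 d0 a b" "0 \<le> best_p2 d0 a b"
    unfolding best_p1_def best_p2_def using d0 a b by auto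
  have "0 \<le> 2 * a * b / (d0 * a + d0 * b + 2 * a * b)"
    using \<open>0 < d0 * a + d0 * b + 2 * a * b\<close> a b by simp
  then show "best_p1 d0 a b + best_p2 d0 a b \<le> 1"
    unfolding one_minus_best_p[symmetric] by simp
qed

lemma ins_cost_expand_at_best:
  "ins_cost d0 a b p q = ins_cost d0 a b (best_p1 d0 a b) (best_p2 d0 a b)
      + a * (p - best_p1 d0 a b)\<^sup>2 + b * (q - best_p2 d0 a b)\<^sup>2
      + d0 / 2 * (p - best_p1 d0 a b + q - best_p2 d0 a b)\<^sup>2"
proof -
  define u where "u = best_p1 d0 a b"
  define v where "v = best_p2 d0 a b"
  have "ins_cost d0 a b p q = ins_cost d0 a b u v
      + (2 * a * u - d0 * (1 - u - v)) * (p - u) + (2 * b * v - d0 * (1 - u - v)) * (q - v)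
      + a * (p - u)\<^sup>2 + b * (q - v)\<^sup>2 + d0 / 2 * (p - u + q - v)\<^sup>2"
    unfolding ins_cost_def by (simp add: power2_eq_square algebra_simps)
  moreover have "2 * a * u = d0 * (1 - u - v)" "2 * b * v = d0 * (1 - u - v)"
    unfolding u_def v_def one_minus_best_p unfolding best_p1_def best_p2_def by simp_all
  ultimately show ?thesis
    unfolding u_def v_def by simp
qed

lemma ins_cost_best_le: "ins_cost d0 a b (best_p1 d0 a b) (best_p2 d0 a b) \<le> ins_cost d0 a b p q"
  using ins_cost_expand_at_best[of p q] d0 a b by simp

lemma ins_cost_eq_best_imp:
  assumes "ins_cost d0 a b p q = ins_cost d0 a b (best_p1 d0 a b) (best_p2 d0 a b)"
  shows "p = best_p1 d0 a b" "q = best_p2 d0 a b"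
proof -
  have "a * (p - best_p1 d0 a b)\<^sup>2 = 0" "b * (q - best_p2 d0 a b)\<^sup>2 = 0"
    using ins_cost_expand_at_best[of p q] assms d0 a b
    by (smt (verit) zero_le_power2 mult_nonneg_nonneg divide_nonneg_nonneg)+
  then show "p = best_p1 d0 a b" "q = best_p2 d0 a b"
    using a b by simp_all
qed

end

definition leader_gain_num :: "real \<Rightarrow> real \<Rightarrow> real \<Rightarrow> real \<Rightarrow> real" where
  "leader_gain_num d l b a = a * b\<^sup>2 - l * a\<^sup>2 * b - d / 2 * (b - l * a)\<^sup>2"

definition leader_gain_den :: "real \<Rightarrow> real \<Rightarrow> real \<Rightarrow> real" where
  "leader_gain_den d0 b a = (d0 + 2 * b) * a + d0 * b"

lemma leader_gain_eq:
  assumes "d0 > 0" "b > 0" "a \<ge> 0"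
  shows "leader_gain d0 d l a b = d0\<^sup>2 * leader_gain_num d l b a / (leader_gain_den d0 b a)\<^sup>2"
proof -
  define E where "E = leader_gain_den d0 b a"
  have "E > 0"
    unfolding E_def leader_gain_den_def using assms by (intro add_nonneg_pos) auto
  moreover have "best_p1 d0 a b = d0 * b / E" "best_p2 d0 a b = d0 * a / E"
    unfolding best_p1_def best_p2_def E_def leader_gain_den_def by (simp_all add: algebra_simps)
  ultimately show ?thesis
    unfolding leader_gain_def reins_gain_def leader_gain_num_def E_def[symmetric]
    by (simp (no_asm_simp) add: power2_eq_square field_simps)
qed

lemma leader_gain_cross_diff:
  assumes d0: "d0 > 0" and d: "d > 0" and l: "l > 0" and b: "b > 0"
  defines "c \<equiv> phi d0 d l b"
  defines "\<kappa> \<equiv> leader_gain_num d l b c * (d0 + 2 * b)\<^sup>2 + (l * b + d * l\<^sup>2 / 2) * (leader_gain_den d0 b c)\<^sup>2"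
  shows "leader_gain_num d l b z * (leader_gain_den d0 b c)\<^sup>2 - leader_gain_num d l b c * (leader_gain_den d0 b z)\<^sup>2
    = - (\<kappa> * (z - c)\<^sup>2)"
proof -
  define K where "K = d0 + 2 * b"
  \<comment> \<open>c is the critical point of the gain, so this quadratic in z has a double root at c\<close>
  have critical: "b\<^sup>2 * (d0 * b + d * d0 * l + d * K) - c * b * (K * b + d * l * K + 2 * l * d0 * b + d * l\<^sup>2 * d0) = 0"
  proof -
    have "K * b + d * l * K + 2 * l * d0 * b + d * l\<^sup>2 * d0 = phi_den d0 d l b"
      unfolding K_def phi_den_def by (simp add: power2_eq_square algebra_simps)
    moreover have "c * phi_den d0 d l b = (d0 + 2 * d) * b\<^sup>2 + (1 + l) * d0 * d * b"
      unfolding c_def phi_eq_div_den using phi_den_pos[OF d0 d l, of b] b by simp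
    ultimately show ?thesis
      by (simp add: K_def power2_eq_square algebra_simps)
  qed
  have "leader_gain_num d l b z * (leader_gain_den d0 b c)\<^sup>2 - leader_gain_num d l b c * (leader_gain_den d0 b z)\<^sup>2
      = leader_gain_den d0 b c * (b\<^sup>2 * (d0 * b + d * d0 * l + d * K)
          - c * b * (K * b + d * l * K + 2 * l * d0 * b + d * l\<^sup>2 * d0)) * (z - c)
        - \<kappa> * (z - c)\<^sup>2"
    unfolding leader_gain_num_def leader_gain_den_def \<kappa>_def K_def by (simp add: power2_eq_square field_simps)
  then show ?thesis
    unfolding critical by simp
qed

lemma leader_gain_less_at_phi:
  assumes d0: "d0 > 0" and d: "d > 0" and l: "l > 0" and b: "b > 0" and x: "x \<ge> 0"
    and "x \<noteq> phi d0 d l b"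
  shows "leader_gain d0 d l x b < leader_gain d0 d l (phi d0 d l b) b"
proof -
  define c where "c = phi d0 d l b"
  define n where "n = leader_gain_num d l b"
  define D where "D = leader_gain_den d0 b"
  define \<kappa> where "\<kappa> = n c * (d0 + 2 * b)\<^sup>2 + (l * b + d * l\<^sup>2 / 2) * (D c)\<^sup>2"
  have cross: "n z * (D c)\<^sup>2 - n c * (D z)\<^sup>2 = - (\<kappa> * (z - c)\<^sup>2)" for z
    unfolding n_def D_def \<kappa>_def c_def by (rule leader_gain_cross_diff[OF d0 d l b])
  have c: "c > 0"
    unfolding c_def using phi_pos d0 d l b by blast
  have Dpos: "D c > 0" "D x > 0"
    unfolding D_def leader_gain_den_def using c b d0 x by (auto intro!: add_nonneg_pos)
  have "\<kappa> > 0"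
  proof -
    define z0 where "z0 = - (d0 * b / (d0 + 2 * b))"
    have "d0 + 2 * b > 0"
      using d0 b by simp
    then have "z0 < 0" "D z0 = 0"
      unfolding z0_def D_def leader_gain_den_def using d0 b by auto
    have "z0 * b\<^sup>2 < 0" "0 \<le> l * z0\<^sup>2 * b" "0 \<le> d / 2 * (b - l * z0)\<^sup>2"
      using \<open>z0 < 0\<close> b l d by (simp_all add: mult_neg_pos)
    then have "n z0 < 0"
      unfolding n_def leader_gain_num_def by linarith
    then have "n z0 * (D c)\<^sup>2 < 0"
      using Dpos by (simp add: mult_neg_pos)
    then have "\<kappa> * (z0 - c)\<^sup>2 > 0"
      using cross[of z0] \<open>D z0 = 0\<close> by simp
    then show ?thesis
      by (simp add: zero_less_mult_iff)
  qed
  have gain: "leader_gain d0 d l z b = d0\<^sup>2 * n z / (D z)\<^sup>2" if "z \<ge> 0" for z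
    unfolding leader_gain_eq[OF d0 b that] n_def D_def ..
  have "leader_gain d0 d l x b - leader_gain d0 d l c b
      = d0\<^sup>2 * (n x * (D c)\<^sup>2 - n c * (D x)\<^sup>2) / ((D x)\<^sup>2 * (D c)\<^sup>2)"
    unfolding gain[OF x] gain[OF less_imp_le[OF c]] using Dpos
    by (simp add: diff_frac_eq algebra_simps)
  also have "\<dots> = - (d0\<^sup>2 * \<kappa> * (x - c)\<^sup>2 / ((D x)\<^sup>2 * (D c)\<^sup>2))"
    unfolding cross by simp
  also have "\<dots> < 0"
    using \<open>\<kappa> > 0\<close> Dpos d0 assms(6) unfolding c_def by simp
  finally show ?thesis
    unfolding c_def by simp
qed

lemma leader_gain_le_at_phi:
  assumes "d0 > 0" "d > 0" "l > 0" "b > 0" "x \<ge> 0"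
  shows "leader_gain d0 d l x b \<le> leader_gain d0 d l (phi d0 d l b) b"
  using leader_gain_less_at_phi[OF assms] by (cases "x = phi d0 d l b") auto

section \<open>Exponential utility of Gaussian wealth\<close>

lemma U_exp_le_iff: "d > 0 \<Longrightarrow> U_exp d x \<le> U_exp d y \<longleftrightarrow> x \<le> y"
  unfolding U_exp_def by (simp add: divide_le_cancel)

lemma gauss_EU_U_exp:
  assumes "d > 0" "v \<ge> 0"
  shows "gauss_EU (U_exp d) m v = U_exp d (m - d * v / 2)"
proof (cases "v = 0")
  case True
  then show ?thesis
    by (simp add: gauss_EU_def)
next
  case False
  with assms have v: "v > 0"
    by simp
  \<comment> \<open>completing the square: the exponential tilt shifts the mean to m - d v\<close>
  have tilt: "U_exp d y * normal_density m (sqrt v) y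
      = U_exp d (m - d * v / 2) * normal_density (m - d * v) (sqrt v) y" for y
  proof -
    have "- d * y - (y - m)\<^sup>2 / (2 * v) = - d * (m - d * v / 2) - (y - (m - d * v))\<^sup>2 / (2 * v)"
      using v by (simp add: power2_eq_square field_simps)
    then have "exp (- d * y) * exp (- (y - m)\<^sup>2 / (2 * v))
        = exp (- d * (m - d * v / 2)) * exp (- (y - (m - d * v))\<^sup>2 / (2 * v))"
      by (simp add: exp_add[symmetric])
    then show ?thesis
      unfolding U_exp_def normal_density_def using v by (simp add: algebra_simps)
  qed
  have "gauss_EU (U_exp d) m v = (LINT y|lborel. U_exp d y * normal_density m (sqrt v) y)"
    using False by (simp add: gauss_EU_def)
  also have "\<dots> = U_exp d (m - d * v / 2) * (LINT y|lborel. normal_density (m - d * v) (sqrt v) y)"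
    unfolding tilt by simp
  also have "\<dots> = U_exp d (m - d * v / 2)"
    using integral_normal_density[of "sqrt v" "m - d * v"] v by simp
  finally show ?thesis .
qed

lemma gauss_EU_U_exp_set_integral:
  fixes a b :: "real \<Rightarrow> real"
  assumes "d > 0" "set_integrable M S a" "set_integrable M S (\<lambda>s. (b s)\<^sup>2)"
  shows "gauss_EU (U_exp d) (x + (LINT s:S|M. a s)) (\<sigma>\<^sup>2 * (LINT s:S|M. (b s)\<^sup>2))
    = U_exp d (x + (LINT s:S|M. a s - d * \<sigma>\<^sup>2 / 2 * (b s)\<^sup>2))"
proof -
  have "0 \<le> (LINT s:S|M. (b s)\<^sup>2)"
    unfolding set_lebesgue_integral_def by (intro Bochner_Integration.integral_nonneg) simp
  then have "gauss_EU (U_exp d) (x + (LINT s:S|M. a s)) (\<sigma>\<^sup>2 * (LINT s:S|M. (b s)\<^sup>2))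
      = U_exp d (x + (LINT s:S|M. a s) - d * (\<sigma>\<^sup>2 * (LINT s:S|M. (b s)\<^sup>2)) / 2)"
    using assms(1) by (simp add: gauss_EU_U_exp)
  also have "(LINT s:S|M. a s - d * \<sigma>\<^sup>2 / 2 * (b s)\<^sup>2)
      = (LINT s:S|M. a s) - d * (\<sigma>\<^sup>2 * (LINT s:S|M. (b s)\<^sup>2)) / 2"
    using assms(2,3) by (simp add: set_integral_diff)
  ultimately show ?thesis
    by (simp add: add_diff_eq)
qed

lemma set_borel_measurable_iff_restrict_space:
  fixes f :: "'a \<Rightarrow> 'b::real_normed_vector"
  assumes "\<Omega> \<in> sets M"
  shows "set_borel_measurable M \<Omega> f \<longleftrightarrow> f \<in> borel_measurable (restrict_space M \<Omega>)"
  using assms by (simp add: set_borel_measurable_def borel_measurable_restrict_space_iff)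

lemma set_integral_ge_imp_AE_eq:
  fixes f g :: "'a \<Rightarrow> real"
  assumes "A \<in> sets M" "set_integrable M A f" "set_integrable M A g"
    and "\<And>x. x \<in> A \<Longrightarrow> f x \<le> g x" "(LINT x:A|M. g x) \<le> (LINT x:A|M. f x)"
  shows "AE x\<in>A in M. f x = g x"
proof -
  let ?h = "\<lambda>x. indicator A x * (g x - f x)"
  have int: "integrable M ?h"
    using set_integral_diff(1)[OF assms(3,2)] by (simp add: set_integrable_def)
  have nonneg: "AE x in M. 0 \<le> ?h x"
    using assms(4) by (simp add: indicator_def)
  have "integral\<^sup>L M ?h = (LINT x:A|M. g x) - (LINT x:A|M. f x)"
    using set_integral_diff(2)[OF assms(3,2)] by (simp add: set_lebesgue_integral_def)
  moreover have "integral\<^sup>L M ?h \<ge> 0"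
    using nonneg by (rule integral_nonneg_AE)
  ultimately have "integral\<^sup>L M ?h = 0"
    using assms(5) by linarith
  then have "AE x in M. ?h x = 0"
    using integral_nonneg_eq_0_iff_AE[OF int nonneg] by simp
  then show ?thesis
    by eventually_elim (simp add: indicator_def)
qed

lemma set_integrable_bounded_Icc:
  fixes f :: "real \<Rightarrow> real"
  assumes "f \<in> borel_measurable (restrict_space lborel {a..b})" "\<forall>s\<in>{a..b}. \<bar>f s\<bar> \<le> M" "a \<le> t"
  shows "set_integrable lborel {t..b} f"
proof -
  have "f \<in> borel_measurable (restrict_space lborel {t..b})"
    using assms(1) by (rule measurable_restrict_mono) (use assms(3) in auto)
  moreover have "finite_measure (restrict_space lborel {t..b})"
    by (intro finite_measureI) (simp add: space_restrict_space emeasure_restrict_space emeasure_lborel_Icc_eq)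
  ultimately have "integrable (restrict_space lborel {t..b}) f"
    using assms(2,3) by (intro finite_measure.integrable_const_bound[where B = M])
      (auto simp: AE_restrict_space_iff)
  then show ?thesis
    by (simp add: set_integrable_eq)
qed

lemma adm_premium_measurable:
  "adm_premium T th \<Longrightarrow> th \<in> borel_measurable (restrict_space lborel {0..T})"
  by (simp add: adm_premium_def set_borel_measurable_iff_restrict_space)

lemma adm_reins_measurable:
  "adm_reins T p1 p2 \<Longrightarrow> p1 \<in> borel_measurable (restrict_space lborel {0..T})"
  "adm_reins T p1 p2 \<Longrightarrow> p2 \<in> borel_measurable (restrict_space lborel {0..T})"
  by (simp_all add: adm_reins_def set_borel_measurable_iff_restrict_space)

context
  fixes T :: real and th1 th2 p1 p2 :: "real \<Rightarrow> real" and F :: "real \<Rightarrow> real \<Rightarrow> real \<Rightarrow> real \<Rightarrow> real"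
  assumes th1: "adm_premium T th1" and th2: "adm_premium T th2" and p: "adm_reins T p1 p2"
    and F: "continuous_on UNIV (\<lambda>(a, b, p, q). F a b p q)"
begin

lemma admissible_bounded: "\<exists>M. \<forall>s\<in>{0..T}. \<bar>F (th1 s) (th2 s) (p1 s) (p2 s)\<bar> \<le> M"
proof -
  obtain B1 B2 where B: "\<forall>s\<in>{0..T}. th1 s \<in> {0..B1} \<and> th2 s \<in> {0..B2}"
    using th1 th2 unfolding adm_premium_def by (meson atLeastAtMost_iff less_imp_le)
  define G :: "real \<times> real \<times> real \<times> real \<Rightarrow> real" where "G = (\<lambda>(a, b, p, q). F a b p q)"
  let ?K = "{0..B1} \<times> {0..B2} \<times> {0..1::real} \<times> {0..1::real}"
  have "compact ?K"
    by (intro compact_Times) simp_all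
  then have "compact (G ` ?K)"
    unfolding G_def by (rule compact_continuous_image[OF continuous_on_subset[OF F subset_UNIV]])
  then obtain M where M: "\<forall>y\<in>G ` ?K. norm y \<le> M"
    using compact_imp_bounded bounded_iff by metis
  have "\<bar>F (th1 s) (th2 s) (p1 s) (p2 s)\<bar> \<le> M" if "s \<in> {0..T}" for s
  proof -
    have "0 \<le> p1 s" "0 \<le> p2 s" "p1 s + p2 s \<le> 1"
      using p that unfolding adm_reins_def by auto
    then have "(th1 s, th2 s, p1 s, p2 s) \<in> ?K"
      using B that by auto
    with M have "\<bar>G (th1 s, th2 s, p1 s, p2 s)\<bar> \<le> M"
      by auto
    then show ?thesis
      by (simp add: G_def)
  qed
  then show ?thesis
    by blast
qed

lemma admissible_measurable:
  "(\<lambda>s. F (th1 s) (th2 s) (p1 s) (p2 s)) \<in> borel_measurable (restrict_space lborel {0..T})"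
proof -
  define G :: "real \<times> real \<times> real \<times> real \<Rightarrow> real" where "G = (\<lambda>(a, b, p, q). F a b p q)"
  note [measurable] = adm_premium_measurable[OF th1] adm_premium_measurable[OF th2] adm_reins_measurable[OF p]
  have "(\<lambda>s. (th1 s, th2 s, p1 s, p2 s)) \<in> borel_measurable (restrict_space lborel {0..T})"
    by measurable
  moreover have "G \<in> borel_measurable borel"
    using F unfolding G_def by (rule borel_measurable_continuous_onI)
  ultimately have "(\<lambda>s. G (th1 s, th2 s, p1 s, p2 s)) \<in> borel_measurable (restrict_space lborel {0..T})"
    by (rule measurable_compose)
  then show ?thesis
    by (simp add: G_def)
qed

lemma set_integrable_admissible:
  "0 \<le> t \<Longrightarrow> set_integrable lborel {t..T} (\<lambda>s. F (th1 s) (th2 s) (p1 s) (p2 s))"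
  using admissible_bounded admissible_measurable set_integrable_bounded_Icc by blast

end

lemma J_ins_eq:
  assumes "adm_premium T th1" "adm_premium T th2" "adm_reins T p1 p2" "0 \<le> t" "d0 > 0"
  shows "J_ins T \<mu> \<sigma> c d0 th1 th2 p1 p2 t x
    = U_exp d0 (x + (LINT s:{t..T}|lborel. c - \<mu> - \<sigma>\<^sup>2 * ins_cost d0 (th1 s) (th2 s) (p1 s) (p2 s)))"
proof -
  have "set_integrable lborel {t..T} (\<lambda>s. c - \<mu> - th1 s * \<sigma>\<^sup>2 * (p1 s)\<^sup>2 - th2 s * \<sigma>\<^sup>2 * (p2 s)\<^sup>2)"
    by (rule set_integrable_admissible[OF assms(1-3) _ assms(4),
          where F = "\<lambda>a b p q. c - \<mu> - a * \<sigma>\<^sup>2 * p\<^sup>2 - b * \<sigma>\<^sup>2 * q\<^sup>2"])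
      (unfold case_prod_unfold, intro continuous_intros)
  moreover have "set_integrable lborel {t..T} (\<lambda>s. (1 - p1 s - p2 s)\<^sup>2)"
    by (rule set_integrable_admissible[OF assms(1-3) _ assms(4), where F = "\<lambda>a b p q. (1 - p - q)\<^sup>2"])
      (unfold case_prod_unfold, intro continuous_intros)
  ultimately show ?thesis
    unfolding J_ins_def using assms(5)
    by (simp add: gauss_EU_U_exp_set_integral ins_cost_def algebra_simps)
qed

lemma J_re_eq:
  assumes "adm_premium T thi" "adm_premium T thj" "adm_reins T qi qj" "0 \<le> t" "d > 0"
  shows "J_re T \<sigma> d l thi thj qi qj t y
    = U_exp d (y + (LINT s:{t..T}|lborel. \<sigma>\<^sup>2 * reins_gain d l (thi s) (thj s) (qi s) (qj s)))"
proof -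
  have "set_integrable lborel {t..T} (\<lambda>s. thi s * \<sigma>\<^sup>2 * (qi s)\<^sup>2 - l * (thj s * \<sigma>\<^sup>2 * (qj s)\<^sup>2))"
    by (rule set_integrable_admissible[OF assms(1-3) _ assms(4),
          where F = "\<lambda>a b p q. a * \<sigma>\<^sup>2 * p\<^sup>2 - l * (b * \<sigma>\<^sup>2 * q\<^sup>2)"])
      (unfold case_prod_unfold, intro continuous_intros)
  moreover have "set_integrable lborel {t..T} (\<lambda>s. (qi s - l * qj s)\<^sup>2)"
    by (rule set_integrable_admissible[OF assms(1-3) _ assms(4), where F = "\<lambda>a b p q. (p - l * q)\<^sup>2"])
      (unfold case_prod_unfold, intro continuous_intros)
  ultimately show ?thesis
    unfolding J_re_def using assms(5)
    by (simp add: gauss_EU_U_exp_set_integral reins_gain_def algebra_simps)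
qed

lemma adm_premium_const: "a > 0 \<Longrightarrow> adm_premium T (\<lambda>_. a)"
  by (auto simp: adm_premium_def set_borel_measurable_iff_restrict_space)

lemma adm_premium_phi:
  assumes "d0 > 0" "d > 0" "l > 0" "adm_premium T th"
  shows "adm_premium T (\<lambda>s. phi d0 d l (th s))"
proof -
  have [measurable]: "th \<in> borel_measurable (restrict_space lborel {0..T})"
    using assms(4) by (rule adm_premium_measurable)
  have "(\<lambda>s. phi d0 d l (th s)) \<in> borel_measurable (restrict_space lborel {0..T})"
    unfolding phi_def by measurable
  then have "set_borel_measurable lborel {0..T} (\<lambda>s. phi d0 d l (th s))"
    by (simp add: set_borel_measurable_iff_restrict_space)
  moreover have "\<forall>s\<in>{0..T}. 0 < phi d0 d l (th s) \<and> phi d0 d l (th s) \<le> (d0 + 2 * d) / 2"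
    using assms phi_pos phi_less_limit unfolding adm_premium_def by (metis less_imp_le)
  ultimately show ?thesis
    unfolding adm_premium_def by blast
qed

lemma adm_reins_best:
  assumes "adm_premium T th1" "adm_premium T th2" "d0 > 0"
  shows "adm_reins T (\<lambda>s. best_p1 d0 (th1 s) (th2 s)) (\<lambda>s. best_p2 d0 (th1 s) (th2 s))"
proof -
  have [measurable]: "th1 \<in> borel_measurable (restrict_space lborel {0..T})"
      "th2 \<in> borel_measurable (restrict_space lborel {0..T})"
    using assms(1,2) by (auto intro: adm_premium_measurable)
  have "(\<lambda>s. best_p1 d0 (th1 s) (th2 s)) \<in> borel_measurable (restrict_space lborel {0..T})"
      "(\<lambda>s. best_p2 d0 (th1 s) (th2 s)) \<in> borel_measurable (restrict_space lborel {0..T})"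
    unfolding best_p1_def best_p2_def by measurable
  then have "set_borel_measurable lborel {0..T} (\<lambda>s. best_p1 d0 (th1 s) (th2 s))"
      "set_borel_measurable lborel {0..T} (\<lambda>s. best_p2 d0 (th1 s) (th2 s))"
    by (simp_all add: set_borel_measurable_iff_restrict_space)
  moreover have "\<forall>s\<in>{0..T}. 0 \<le> best_p1 d0 (th1 s) (th2 s) \<and> 0 \<le> best_p2 d0 (th1 s) (th2 s)
      \<and> best_p1 d0 (th1 s) (th2 s) + best_p2 d0 (th1 s) (th2 s) \<le> 1"
  proof
    fix s
    assume "s \<in> {0..T}"
    then have "th1 s > 0" "th2 s > 0"
      using assms(1,2) unfolding adm_premium_def by auto
    then show "0 \<le> best_p1 d0 (th1 s) (th2 s) \<and> 0 \<le> best_p2 d0 (th1 s) (th2 s)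
      \<and> best_p1 d0 (th1 s) (th2 s) + best_p2 d0 (th1 s) (th2 s) \<le> 1"
      using best_p_bounds[OF assms(3)] by simp
  qed
  ultimately show ?thesis
    unfolding adm_reins_def by blast
qed

lemma set_integrable_ins_cost:
  assumes "adm_premium T th1" "adm_premium T th2" "adm_reins T p1 p2" "0 \<le> t"
  shows "set_integrable lborel {t..T} (\<lambda>s. c - \<mu> - \<sigma>\<^sup>2 * ins_cost d0 (th1 s) (th2 s) (p1 s) (p2 s))"
  by (rule set_integrable_admissible[OF assms(1-3) _ assms(4), where F = "\<lambda>a b p q. c - \<mu> - \<sigma>\<^sup>2 * ins_cost d0 a b p q"])
    (unfold case_prod_unfold ins_cost_def, intro continuous_intros)

lemma set_integrable_reins_gain:
  assumes "adm_premium T th1" "adm_premium T th2" "adm_reins T p1 p2" "0 \<le> t"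
  shows "set_integrable lborel {t..T} (\<lambda>s. \<sigma>\<^sup>2 * reins_gain d l (th1 s) (th2 s) (p1 s) (p2 s))"
  by (rule set_integrable_admissible[OF assms(1-3) _ assms(4), where F = "\<lambda>a b p q. \<sigma>\<^sup>2 * reins_gain d l a b p q"])
    (unfold case_prod_unfold reins_gain_def, intro continuous_intros)

section \<open>Best responses and equilibria\<close>

lemma ins_opt_best:
  assumes "adm_premium T th1" "adm_premium T th2" "d0 > 0"
  shows "ins_opt T \<mu> \<sigma> c d0 th1 th2 (\<lambda>s. best_p1 d0 (th1 s) (th2 s)) (\<lambda>s. best_p2 d0 (th1 s) (th2 s))"
  unfolding ins_opt_def
proof (intro conjI ballI allI impI)
  let ?q1 = "\<lambda>s. best_p1 d0 (th1 s) (th2 s)" and ?q2 = "\<lambda>s. best_p2 d0 (th1 s) (th2 s)"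
  show best: "adm_reins T ?q1 ?q2"
    using assms by (rule adm_reins_best)
  fix t x p1 p2
  assume t: "t \<in> {0..T}" and p: "adm_reins T p1 p2"
  have "(LINT s:{t..T}|lborel. c - \<mu> - \<sigma>\<^sup>2 * ins_cost d0 (th1 s) (th2 s) (p1 s) (p2 s))
      \<le> (LINT s:{t..T}|lborel. c - \<mu> - \<sigma>\<^sup>2 * ins_cost d0 (th1 s) (th2 s) (?q1 s) (?q2 s))"
  proof (rule set_integral_mono)
    fix s
    assume "s \<in> {t..T}"
    with t have "th1 s > 0" "th2 s > 0"
      using assms(1,2) unfolding adm_premium_def by auto
    then show "c - \<mu> - \<sigma>\<^sup>2 * ins_cost d0 (th1 s) (th2 s) (p1 s) (p2 s)
        \<le> c - \<mu> - \<sigma>\<^sup>2 * ins_cost d0 (th1 s) (th2 s) (?q1 s) (?q2 s)"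
      using ins_cost_best_le[OF assms(3)] by (simp add: mult_left_mono)
  qed (use assms p best t in \<open>auto intro: set_integrable_ins_cost\<close>)
  then show "J_ins T \<mu> \<sigma> c d0 th1 th2 p1 p2 t x \<le> J_ins T \<mu> \<sigma> c d0 th1 th2 ?q1 ?q2 t x"
    using t assms p best by (simp add: J_ins_eq U_exp_le_iff)
qed

lemma ins_opt_swap: "ins_opt T \<mu> \<sigma> c d0 th1 th2 p1 p2 \<longleftrightarrow> ins_opt T \<mu> \<sigma> c d0 th2 th1 p2 p1"
proof -
  have "J_ins T \<mu> \<sigma> c d0 th1 th2 p1 p2 = J_ins T \<mu> \<sigma> c d0 th2 th1 p2 p1" for th1 th2 p1 p2
    unfolding J_ins_def by (simp add: algebra_simps)
  moreover have "adm_reins T p1 p2 \<longleftrightarrow> adm_reins T p2 p1" for p1 p2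
    unfolding adm_reins_def by (auto simp: add.commute)
  ultimately show ?thesis
    unfolding ins_opt_def by metis
qed

lemma set_integrable_leader_gain:
  assumes "adm_premium T thi" "adm_premium T thj" "0 \<le> t" "d0 > 0"
  shows "set_integrable lborel {t..T} (\<lambda>s. \<sigma>\<^sup>2 * leader_gain d0 d l (thi s) (thj s))"
  using set_integrable_reins_gain[OF assms(1,2) adm_reins_best[OF assms(1,2,4)] assms(3)]
  unfolding leader_gain_def .

definition reinsurer_opt :: "real \<Rightarrow> real \<Rightarrow> real \<Rightarrow> real \<Rightarrow> real \<Rightarrow> real \<Rightarrow> real
    \<Rightarrow> (real \<Rightarrow> real) \<Rightarrow> (real \<Rightarrow> real) \<Rightarrow> (real \<Rightarrow> real) \<Rightarrow> (real \<Rightarrow> real) \<Rightarrow> bool" where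
  "reinsurer_opt T \<mu> \<sigma> c d0 d l thi thj qi qj \<longleftrightarrow>
     (\<forall>thi' qi' qj'. adm_premium T thi' \<and> ins_opt T \<mu> \<sigma> c d0 thi' thj qi' qj' \<longrightarrow>
        (\<forall>t\<in>{0..T}. \<forall>y. J_re T \<sigma> d l thi' thj qi' qj' t y \<le> J_re T \<sigma> d l thi thj qi qj t y))"

lemma is_equilibrium_iff:
  "is_equilibrium T \<mu> \<sigma> c d0 d1 d2 l1 l2 th1 th2 p1 p2 \<longleftrightarrow>
     adm_premium T th1 \<and> adm_premium T th2 \<and> ins_opt T \<mu> \<sigma> c d0 th1 th2 p1 p2 \<and>
     reinsurer_opt T \<mu> \<sigma> c d0 d1 l2 th1 th2 p1 p2 \<and> reinsurer_opt T \<mu> \<sigma> c d0 d2 l1 th2 th1 p2 p1"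
  unfolding is_equilibrium_def reinsurer_opt_def by (auto simp: ins_opt_swap[of T \<mu> \<sigma> c d0 _ th1])

context
  fixes T \<mu> \<sigma> c d0 :: real
  assumes T: "T \<ge> 0" and \<sigma>: "\<sigma> > 0" and d0: "d0 > 0"
begin

lemma ins_opt_imp_AE_best:
  assumes th1: "adm_premium T th1" and th2: "adm_premium T th2"
    and opt: "ins_opt T \<mu> \<sigma> c d0 th1 th2 p1 p2"
  shows "AE s\<in>{0..T} in lborel. p1 s = best_p1 d0 (th1 s) (th2 s) \<and> p2 s = best_p2 d0 (th1 s) (th2 s)"
proof -
  let ?q1 = "\<lambda>s. best_p1 d0 (th1 s) (th2 s)" and ?q2 = "\<lambda>s. best_p2 d0 (th1 s) (th2 s)"
  let ?rate = "\<lambda>p1 p2 s. c - \<mu> - \<sigma>\<^sup>2 * ins_cost d0 (th1 s) (th2 s) (p1 s) (p2 s)"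
  have best: "adm_reins T ?q1 ?q2"
    using th1 th2 d0 by (rule adm_reins_best)
  have p: "adm_reins T p1 p2"
    using opt unfolding ins_opt_def by blast
  have pos: "th1 s > 0" "th2 s > 0" if "s \<in> {0..T}" for s
    using th1 th2 that unfolding adm_premium_def by auto
  have "J_ins T \<mu> \<sigma> c d0 th1 th2 ?q1 ?q2 0 0 \<le> J_ins T \<mu> \<sigma> c d0 th1 th2 p1 p2 0 0"
    using opt best T unfolding ins_opt_def by simp
  then have "(LINT s:{0..T}|lborel. ?rate ?q1 ?q2 s) \<le> (LINT s:{0..T}|lborel. ?rate p1 p2 s)"
    using th1 th2 best p d0 by (simp add: J_ins_eq U_exp_le_iff)
  moreover have "?rate p1 p2 s \<le> ?rate ?q1 ?q2 s" if "s \<in> {0..T}" for s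
    using ins_cost_best_le[OF d0 pos[OF that]] by (simp add: mult_left_mono)
  ultimately have "AE s\<in>{0..T} in lborel. ?rate p1 p2 s = ?rate ?q1 ?q2 s"
    using th1 th2 p best by (intro set_integral_ge_imp_AE_eq set_integrable_ins_cost) auto
  then show ?thesis
  proof (rule AE_mp, intro AE_I2 impI)
    fix s
    assume "s \<in> {0..T} \<longrightarrow> ?rate p1 p2 s = ?rate ?q1 ?q2 s" "s \<in> {0..T}"
    then show "p1 s = ?q1 s \<and> p2 s = ?q2 s"
      using ins_cost_eq_best_imp[OF d0 pos] \<sigma> by simp
  qed
qed

lemma J_re_ins_opt:
  assumes thi: "adm_premium T thi" and thj: "adm_premium T thj"
    and opt: "ins_opt T \<mu> \<sigma> c d0 thi thj qi qj" and "0 \<le> t" and "d > 0"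
  shows "J_re T \<sigma> d l thi thj qi qj t y
    = U_exp d (y + (LINT s:{t..T}|lborel. \<sigma>\<^sup>2 * leader_gain d0 d l (thi s) (thj s)))"
proof -
  let ?gain = "\<lambda>qi qj s. \<sigma>\<^sup>2 * reins_gain d l (thi s) (thj s) (qi s) (qj s)"
  let ?b1 = "\<lambda>s. best_p1 d0 (thi s) (thj s)" and ?b2 = "\<lambda>s. best_p2 d0 (thi s) (thj s)"
  have q: "adm_reins T qi qj"
    using opt unfolding ins_opt_def by blast
  have best: "adm_reins T ?b1 ?b2"
    using thi thj d0 by (rule adm_reins_best)
  have "AE s\<in>{t..T} in lborel. ?gain qi qj s = ?gain ?b1 ?b2 s"
    using ins_opt_imp_AE_best[OF thi thj opt] by eventually_elim (use \<open>0 \<le> t\<close> in auto)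
  then have "(LINT s:{t..T}|lborel. ?gain qi qj s) = (LINT s:{t..T}|lborel. ?gain ?b1 ?b2 s)"
    using set_integrable_reins_gain[OF thi thj q \<open>0 \<le> t\<close>] set_integrable_reins_gain[OF thi thj best \<open>0 \<le> t\<close>]
    by (intro antisym set_integral_mono_AE) (auto elim: AE_mp)
  then show ?thesis
    unfolding J_re_eq[OF thi thj q \<open>0 \<le> t\<close> \<open>d > 0\<close>] leader_gain_def by (simp only:)
qed

lemma reinsurer_opt_imp_AE_phi:
  assumes "d > 0" "l > 0" and thi: "adm_premium T thi" and thj: "adm_premium T thj"
    and opt: "ins_opt T \<mu> \<sigma> c d0 thi thj qi qj"
    and reins: "reinsurer_opt T \<mu> \<sigma> c d0 d l thi thj qi qj"
  shows "AE s\<in>{0..T} in lborel. thi s = phi d0 d l (thj s)"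
proof -
  let ?th = "\<lambda>s. phi d0 d l (thj s)"
  let ?gain = "\<lambda>th s. \<sigma>\<^sup>2 * leader_gain d0 d l (th s) (thj s)"
  have th: "adm_premium T ?th"
    using d0 assms(1,2) thj by (rule adm_premium_phi)
  have pos: "thi s > 0" "thj s > 0" if "s \<in> {0..T}" for s
    using thi thj that unfolding adm_premium_def by auto
  \<comment> \<open>deviating to the pointwise best reply phi o thj cannot pay off\<close>
  have "J_re T \<sigma> d l ?th thj (\<lambda>s. best_p1 d0 (?th s) (thj s)) (\<lambda>s. best_p2 d0 (?th s) (thj s)) 0 0
      \<le> J_re T \<sigma> d l thi thj qi qj 0 0"
    using reins th ins_opt_best[OF th thj d0] T unfolding reinsurer_opt_def by simp
  then have "(LINT s:{0..T}|lborel. ?gain ?th s) \<le> (LINT s:{0..T}|lborel. ?gain thi s)"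
    using J_re_ins_opt[OF th thj ins_opt_best[OF th thj d0] order_refl \<open>d > 0\<close>]
      J_re_ins_opt[OF thi thj opt order_refl \<open>d > 0\<close>]
    by (simp add: U_exp_le_iff \<open>d > 0\<close>)
  moreover have "?gain thi s \<le> ?gain ?th s" if "s \<in> {0..T}" for s
    using leader_gain_le_at_phi[OF d0 assms(1,2) pos(2)[OF that] less_imp_le[OF pos(1)[OF that]]]
    by (simp add: mult_left_mono)
  ultimately have "AE s\<in>{0..T} in lborel. ?gain thi s = ?gain ?th s"
    using thi thj th d0 by (intro set_integral_ge_imp_AE_eq set_integrable_leader_gain) auto
  then show ?thesis
  proof (rule AE_mp, intro AE_I2 impI)
    fix s
    assume "s \<in> {0..T} \<longrightarrow> ?gain thi s = ?gain ?th s" "s \<in> {0..T}"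
    then show "thi s = ?th s"
      using leader_gain_less_at_phi[OF d0 assms(1,2) pos(2) less_imp_le[OF pos(1)]] \<sigma>
      by fastforce
  qed
qed

lemma reinsurer_opt_const:
  assumes "d > 0" "l > 0" "b > 0" "a = phi d0 d l b"
  shows "reinsurer_opt T \<mu> \<sigma> c d0 d l (\<lambda>_. a) (\<lambda>_. b) (\<lambda>_. best_p1 d0 a b) (\<lambda>_. best_p2 d0 a b)"
  unfolding reinsurer_opt_def
proof (intro allI impI ballI)
  fix th qi qj t y
  assume "adm_premium T th \<and> ins_opt T \<mu> \<sigma> c d0 th (\<lambda>_. b) qi qj" and t: "t \<in> {0..T}"
  then have th: "adm_premium T th" and opt: "ins_opt T \<mu> \<sigma> c d0 th (\<lambda>_. b) qi qj"
    by auto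
  have "a > 0"
    using phi_pos[OF d0 assms(1-3)] assms(4) by simp
  then have a: "adm_premium T (\<lambda>_. a)" and b: "adm_premium T (\<lambda>_. b)"
    using \<open>b > 0\<close> by (auto intro: adm_premium_const)
  have "(LINT s:{t..T}|lborel. \<sigma>\<^sup>2 * leader_gain d0 d l (th s) b)
      \<le> (LINT s:{t..T}|lborel. \<sigma>\<^sup>2 * leader_gain d0 d l a b)"
  proof (rule set_integral_mono)
    fix s
    assume "s \<in> {t..T}"
    with t th have "th s > 0"
      unfolding adm_premium_def by auto
    then show "\<sigma>\<^sup>2 * leader_gain d0 d l (th s) b \<le> \<sigma>\<^sup>2 * leader_gain d0 d l a b"
      using leader_gain_le_at_phi[OF d0 assms(1-3), of "th s"] assms(4) by (simp add: mult_left_mono)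
  qed (use set_integrable_leader_gain[OF th b _ d0] set_integrable_leader_gain[OF a b _ d0] t in auto)
  then show "J_re T \<sigma> d l th (\<lambda>_. b) qi qj t y
      \<le> J_re T \<sigma> d l (\<lambda>_. a) (\<lambda>_. b) (\<lambda>_. best_p1 d0 a b) (\<lambda>_. best_p2 d0 a b) t y"
    using J_re_ins_opt[OF th b opt _ \<open>d > 0\<close>] J_re_ins_opt[OF a b ins_opt_best[OF a b d0] _ \<open>d > 0\<close>] t
    by (simp add: U_exp_le_iff \<open>d > 0\<close>)
qed

end

context
  fixes T \<mu> \<sigma> c d0 d1 d2 l1 l2 :: real
  assumes T: "T \<ge> 0" and \<sigma>: "\<sigma> > 0" and pos: "d0 > 0" "d1 > 0" "d2 > 0" "l1 > 0" "l2 > 0"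
begin

lemma is_equilibrium_imp_AE_fixpoint:
  assumes "is_equilibrium T \<mu> \<sigma> c d0 d1 d2 l1 l2 th1 th2 p1 p2"
  shows "AE s\<in>{0..T} in lborel. phi_fixpoint d0 d1 d2 l1 l2 (th1 s) (th2 s)
    \<and> p1 s = best_p1 d0 (th1 s) (th2 s) \<and> p2 s = best_p2 d0 (th1 s) (th2 s)"
proof -
  have th1: "adm_premium T th1" and th2: "adm_premium T th2"
    and opt: "ins_opt T \<mu> \<sigma> c d0 th1 th2 p1 p2"
    and reins1: "reinsurer_opt T \<mu> \<sigma> c d0 d1 l2 th1 th2 p1 p2"
    and reins2: "reinsurer_opt T \<mu> \<sigma> c d0 d2 l1 th2 th1 p2 p1"
    using assms unfolding is_equilibrium_iff by auto
  have "AE s\<in>{0..T} in lborel. th1 s = phi d0 d1 l2 (th2 s)"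
    by (rule reinsurer_opt_imp_AE_phi[OF T \<sigma> pos(1,2,5) th1 th2 opt reins1])
  moreover have "AE s\<in>{0..T} in lborel. th2 s = phi d0 d2 l1 (th1 s)"
    using ins_opt_swap opt
    by (intro reinsurer_opt_imp_AE_phi[OF T \<sigma> pos(1,3,4) th2 th1 _ reins2]) blast
  moreover have "AE s\<in>{0..T} in lborel. p1 s = best_p1 d0 (th1 s) (th2 s) \<and> p2 s = best_p2 d0 (th1 s) (th2 s)"
    by (rule ins_opt_imp_AE_best[OF T \<sigma> pos(1) th1 th2 opt])
  moreover have "AE s\<in>{0..T} in lborel. th1 s > 0 \<and> th2 s > 0"
    using th1 th2 unfolding adm_premium_def by (intro AE_I2) auto
  ultimately show ?thesis
    unfolding phi_fixpoint_def by eventually_elim auto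
qed

lemma fixpoint_is_equilibrium:
  assumes "phi_fixpoint d0 d1 d2 l1 l2 a b"
  shows "is_equilibrium T \<mu> \<sigma> c d0 d1 d2 l1 l2 (\<lambda>_. a) (\<lambda>_. b) (\<lambda>_. best_p1 d0 a b) (\<lambda>_. best_p2 d0 a b)"
proof -
  have a: "adm_premium T (\<lambda>_. a)" and b: "adm_premium T (\<lambda>_. b)"
    using assms unfolding phi_fixpoint_def by (auto intro: adm_premium_const)
  have "reinsurer_opt T \<mu> \<sigma> c d0 d1 l2 (\<lambda>_. a) (\<lambda>_. b) (\<lambda>_. best_p1 d0 a b) (\<lambda>_. best_p2 d0 a b)"
    using assms unfolding phi_fixpoint_def by (intro reinsurer_opt_const T \<sigma> pos) auto
  moreover have "reinsurer_opt T \<mu> \<sigma> c d0 d2 l1 (\<lambda>_. b) (\<lambda>_. a) (\<lambda>_. best_p1 d0 b a) (\<lambda>_. best_p2 d0 b a)"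
    using assms unfolding phi_fixpoint_def by (intro reinsurer_opt_const T \<sigma> pos) auto
  ultimately show ?thesis
    unfolding is_equilibrium_iff using a b ins_opt_best[OF a b pos(1)]
    by (simp add: best_p2_swap[of d0 a b] best_p2_swap[of d0 b a])
qed

lemma is_equilibrium_AE_eq_fixpoint:
  assumes "phi_fixpoint d0 d1 d2 l1 l2 a b" "is_equilibrium T \<mu> \<sigma> c d0 d1 d2 l1 l2 th1 th2 p1 p2"
  shows "AE s\<in>{0..T} in lborel.
    th1 s = a \<and> th2 s = b \<and> p1 s = best_p1 d0 a b \<and> p2 s = best_p2 d0 a b"
  using is_equilibrium_imp_AE_fixpoint[OF assms(2)]
  by eventually_elim (use phi_fixpoint_unique[OF pos assms(1)] in auto)

lemma no_equilibrium:
  assumes "T > 0" "l1 * l2 \<ge> 1"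
  shows "\<not> is_equilibrium T \<mu> \<sigma> c d0 d1 d2 l1 l2 th1 th2 p1 p2"
proof
  assume "is_equilibrium T \<mu> \<sigma> c d0 d1 d2 l1 l2 th1 th2 p1 p2"
  from is_equilibrium_imp_AE_fixpoint[OF this] have "AE s\<in>{0..T} in lborel. False"
    by eventually_elim (use phi_fixpoint_imp_lambda_less[OF pos] assms(2) in fastforce)
  then have "{0..T} \<in> null_sets lborel"
    by (simp add: AE_iff_null_sets)
  then show False
    using assms(1) by (auto simp: null_sets_def)
qed

lemma unique_equilibrium:
  assumes "l1 * l2 < 1"
  shows "\<exists>a b. phi_fixpoint d0 d1 d2 l1 l2 a b \<and>
    is_equilibrium T \<mu> \<sigma> c d0 d1 d2 l1 l2 (\<lambda>_. a) (\<lambda>_. b) (\<lambda>_. best_p1 d0 a b) (\<lambda>_. best_p2 d0 a b) \<and>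
    (\<forall>th1 th2 p1 p2. is_equilibrium T \<mu> \<sigma> c d0 d1 d2 l1 l2 th1 th2 p1 p2 \<longrightarrow>
       (AE s\<in>{0..T} in lborel. th1 s = a \<and> th2 s = b \<and> p1 s = best_p1 d0 a b \<and> p2 s = best_p2 d0 a b))"
proof -
  obtain a b where fp: "phi_fixpoint d0 d1 d2 l1 l2 a b"
    using phi_fixpoint_exists[OF pos assms] by blast
  then show ?thesis
    using fixpoint_is_equilibrium[OF fp] is_equilibrium_AE_eq_fixpoint[OF fp] by blast
qed

end

theorem theorem3p3:
  fixes T \<mu> \<sigma> c d0 d1 d2 l1 l2 :: real
  assumes "T > 0" "\<mu> > 0" "\<sigma> > 0" "c > 0" "d0 > 0" "d1 > 0" "d2 > 0"
    and "l1 > 0" "l2 > 0"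
  shows
    "(l1 * l2 < 1 \<longrightarrow>
       (\<exists>!ab :: real \<times> real. fst ab > 0 \<and> snd ab > 0 \<and>
           phi d0 d1 l2 (snd ab) = fst ab \<and> phi d0 d2 l1 (fst ab) = snd ab) \<and>
       (\<exists>a b. a > 0 \<and> b > 0 \<and> phi d0 d1 l2 b = a \<and> phi d0 d2 l1 a = b \<and>
          is_equilibrium T \<mu> \<sigma> c d0 d1 d2 l1 l2 (\<lambda>_. a) (\<lambda>_. b)
            (\<lambda>_. d0 * b / (d0 * a + d0 * b + 2 * a * b))
            (\<lambda>_. d0 * a / (d0 * a + d0 * b + 2 * a * b)) \<and>
          (\<forall>th1 th2 p1 p2. is_equilibrium T \<mu> \<sigma> c d0 d1 d2 l1 l2 th1 th2 p1 p2 \<longrightarrow>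
             (AE s in lborel. s \<in> {0..T} \<longrightarrow>
                th1 s = a \<and> th2 s = b \<and>
                p1 s = d0 * b / (d0 * a + d0 * b + 2 * a * b) \<and>
                p2 s = d0 * a / (d0 * a + d0 * b + 2 * a * b))))) \<and>
     (l1 * l2 \<ge> 1 \<longrightarrow>
       \<not> (\<exists>th1 th2 p1 p2. is_equilibrium T \<mu> \<sigma> c d0 d1 d2 l1 l2 th1 th2 p1 p2))"
proof -
  note game = less_imp_le[OF \<open>T > 0\<close>] \<open>\<sigma> > 0\<close> \<open>d0 > 0\<close> \<open>d1 > 0\<close> \<open>d2 > 0\<close> \<open>l1 > 0\<close> \<open>l2 > 0\<close>
  show ?thesis
    using phi_fixpoint_ex1[OF game(3-)] unique_equilibrium[OF game] no_equilibrium[OF game \<open>T > 0\<close>]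
    unfolding phi_fixpoint_def best_p1_def best_p2_def conj_assoc by blast
qed

end
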